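(* Let $G$ be a finite group and $H\leq G$. If $x\in G$ and $y\in S_x$, then $H_y=H_x$ and consequently $S_y=S_x$. As a result, for any $x,y\in G$ either $S_x=S_y$ or $S_x\cap S_y=\varnothing$.
   Context: For $x\in G$, $H_x=\bigcap_{i\in\mathbb{Z}}x^iHx^{-i}$ (the largest subgroup of $H$ normalized by $x$) and $S_x=H_x\cdot x\subseteq G$. *)

theory Defs
  imports "HOL-Algebra.Algebra"
begin

definition Hx :: "('a, 'b) monoid_scheme \<Rightarrow> 'a set \<Rightarrow> 'a \<Rightarrow> 'a set" where
  "Hx G H x = (\<Inter>i::int. {x [^]\<^bsub>G\<^esub> i \<otimes>\<^bsub>G\<^esub> h \<otimes>\<^bsub>G\<^esub> inv\<^bsub>G\<^esub> (x [^]\<^bsub>G\<^esub> i) | h. h \<in> H})"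

definition Sx :: "('a, 'b) monoid_scheme \<Rightarrow> 'a set \<Rightarrow> 'a \<Rightarrow> 'a set" where
  "Sx G H x = Hx G H x #>\<^bsub>G\<^esub> x"

end

theory Submission
  imports Defs
begin

(* H_x is the intersection of the conjugates x^i H x^-i, hence a subgroup of H normalised by x,
   and it contains every subset of H normalised by x.  If y = k x with k in H_x, then y
   normalises H_x as a product of two elements of its normaliser, so H_x is contained in H_y;
   as x = k^-1 y with k^-1 in H_y, the same argument gives the reverse inclusion. *)

context group
begin

lemma Hx_eq_Inter_conj:
  "Hx G H x = (\<Inter>i::int. x [^] i <# H #> inv (x [^] i))"
  unfolding Hx_def l_coset_def r_coset_def by blast

lemma mem_normalizer_iff:
  assumes "K \<subseteq> carrier G"
  shows "g \<in> normalizer G K \<longleftrightarrow> g \<in> carrier G \<and> g <# K #> inv g = K"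
  using assms unfolding normalizer_def stabilizer_def by auto

lemma conj_set_image:
  "g <# S #> inv g = (\<lambda>h. g \<otimes> h \<otimes> inv g) ` S"
  unfolding l_coset_def r_coset_def by auto

lemma conj_set_mult:
  assumes "S \<subseteq> carrier G" "g \<in> carrier G" "h \<in> carrier G"
  shows "g <# (h <# S #> inv h) #> inv g = (g \<otimes> h) <# S #> inv (g \<otimes> h)"
  using assms by (simp add: coset_assoc lcos_m_assoc coset_mult_assoc inv_mult_group l_coset_subset_G)

lemma subgroup_subset_normalizer:
  assumes "subgroup K G"
  shows "K \<subseteq> normalizer G K"
proof
  fix k assume k: "k \<in> K"
  then have kG: "k \<in> carrier G" using subgroup.mem_carrier[OF assms] by blast
  have "k <# K #> inv k = K"
    using coset_join3[OF kG assms k] coset_join2[OF _ assms] subgroup.m_inv_closed[OF assms k] kG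
    by simp
  then show "k \<in> normalizer G K"
    using mem_normalizer_iff subgroup.subset[OF assms] kG by blast
qed

lemma Hx_subset:
  assumes "subgroup H G"
  shows "Hx G H x \<subseteq> H"
proof -
  have "Hx G H x \<subseteq> x [^] (0::int) <# H #> inv (x [^] (0::int))"
    unfolding Hx_eq_Inter_conj by (rule INT_lower) simp
  also have "\<dots> = H"
    using subgroup.subset[OF assms] by (simp add: lcos_mult_one)
  finally show ?thesis .
qed

lemma Hx_subgroup:
  assumes "subgroup H G" and "x \<in> carrier G"
  shows "subgroup (Hx G H x) G"
  unfolding Hx_eq_Inter_conj
  using assms by (intro subgroups_Inter) (auto intro: subgroup_conjugation_is_surj2)

lemma subset_Hx_if_mem_normalizer:
  assumes "K \<subseteq> H" and "subgroup H G" and "y \<in> normalizer G K"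
  shows "K \<subseteq> Hx G H y"
proof -
  have KG: "K \<subseteq> carrier G" using assms(1) subgroup.subset[OF assms(2)] by blast
  have "K \<subseteq> y [^] i <# H #> inv (y [^] i)" for i :: int
  proof -
    have "y [^] i \<in> normalizer G K"
      using subgroup_int_pow_closed[OF normalizer_imp_subgroup[OF KG] assms(3)] .
    then have "K = y [^] i <# K #> inv (y [^] i)"
      using mem_normalizer_iff[OF KG] by blast
    also have "\<dots> \<subseteq> y [^] i <# H #> inv (y [^] i)"
      using assms(1) unfolding l_coset_def r_coset_def by blast
    finally show ?thesis .
  qed
  then show ?thesis unfolding Hx_eq_Inter_conj by blast
qed

lemma mem_normalizer_Hx:
  assumes "subgroup H G" and x: "x \<in> carrier G"
  shows "x \<in> normalizer G (Hx G H x)"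
proof -
  let ?conj = "\<lambda>g S. g <# S #> inv g"
  have HG: "H \<subseteq> carrier G" using subgroup.subset[OF assms(1)] .
  have conjG: "?conj (x [^] i) H \<subseteq> carrier G" for i :: int
    using HG x by (simp add: l_coset_subset_G r_coset_subset_G)
  have "?conj x (Hx G H x) = (\<lambda>h. x \<otimes> h \<otimes> inv x) ` (\<Inter>i::int. ?conj (x [^] i) H)"
    unfolding Hx_eq_Inter_conj conj_set_image ..
  also have "\<dots> = (\<Inter>i::int. ?conj x (?conj (x [^] i) H))"
    unfolding conj_set_image[of x]
    by (rule image_INT[where C = "carrier G"]) (use x conjG in \<open>auto simp: inj_on_def\<close>)
  also have "\<dots> = (\<Inter>i::int. ?conj (x [^] (1 + i)) H)"
    using x HG by (simp add: conj_set_mult int_pow_mult)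
  also have "\<dots> = Hx G H x"
    unfolding Hx_eq_Inter_conj by (auto simp: INT_iff) (metis add.commute diff_add_cancel)
  finally show ?thesis
    using mem_normalizer_iff Hx_subgroup[OF assms] subgroup.subset x by blast
qed

lemma Hx_subset_Hx_if_mem_Sx:
  assumes "subgroup H G" and x: "x \<in> carrier G" and "y \<in> Sx G H x"
  shows "Hx G H x \<subseteq> Hx G H y"
proof -
  let ?K = "Hx G H x"
  have K: "subgroup ?K G" using Hx_subgroup[OF assms(1) x] .
  obtain k where k: "k \<in> ?K" and y: "y = k \<otimes> x"
    using assms(3) unfolding Sx_def r_coset_def by blast
  have "k \<in> normalizer G ?K" using subgroup_subset_normalizer[OF K] k ..
  then have "y \<in> normalizer G ?K"
    unfolding y using mem_normalizer_Hx[OF assms(1) x]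
    by (rule subgroup.m_closed[OF normalizer_imp_subgroup[OF subgroup.subset[OF K]]])
  then show ?thesis
    using subset_Hx_if_mem_normalizer[OF Hx_subset[OF assms(1)] assms(1)] by blast
qed

lemma Hx_eq_if_mem_Sx:
  assumes "subgroup H G" and x: "x \<in> carrier G" and y: "y \<in> Sx G H x"
  shows "Hx G H y = Hx G H x"
proof
  let ?K = "Hx G H x"
  have K: "subgroup ?K G" using Hx_subgroup[OF assms(1) x] .
  have yG: "y \<in> carrier G"
    using y unfolding Sx_def by (rule subgroup.elemrcos_carrier[OF K is_group x])
  show "?K \<subseteq> Hx G H y" using Hx_subset_Hx_if_mem_Sx[OF assms] .
  have "?K #> y = ?K #> x"
    using repr_independence[OF y[unfolded Sx_def] x K] by simp
  then have "x \<in> Hx G H y #> y"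
    using \<open>?K \<subseteq> Hx G H y\<close> rcos_self[OF x K] unfolding r_coset_def by blast
  then show "Hx G H y \<subseteq> ?K"
    using Hx_subset_Hx_if_mem_Sx[OF assms(1) yG] unfolding Sx_def by blast
qed

lemma Sx_eq_if_mem_Sx:
  assumes "subgroup H G" and x: "x \<in> carrier G" and y: "y \<in> Sx G H x"
  shows "Sx G H y = Sx G H x"
  using repr_independence[OF y[unfolded Sx_def] x Hx_subgroup[OF assms(1) x]]
  unfolding Sx_def Hx_eq_if_mem_Sx[OF assms] by simp

end

theorem lemma4p2:
  fixes G :: "('a, 'b) monoid_scheme" and H :: "'a set"
  assumes "group G" and "finite (carrier G)" and "subgroup H G"
  shows "(\<forall>x \<in> carrier G. \<forall>y \<in> Sx G H x. Hx G H y = Hx G H x \<and> Sx G H y = Sx G H x)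
       \<and> (\<forall>x \<in> carrier G. \<forall>y \<in> carrier G. Sx G H x = Sx G H y \<or> Sx G H x \<inter> Sx G H y = {})"
proof (rule conjI; intro ballI)
  fix x y assume "x \<in> carrier G" "y \<in> Sx G H x"
  then show "Hx G H y = Hx G H x \<and> Sx G H y = Sx G H x"
    using group.Hx_eq_if_mem_Sx[OF assms(1,3)] group.Sx_eq_if_mem_Sx[OF assms(1,3)] by blast
next
  fix x y assume "x \<in> carrier G" "y \<in> carrier G"
  then show "Sx G H x = Sx G H y \<or> Sx G H x \<inter> Sx G H y = {}"
    using group.Sx_eq_if_mem_Sx[OF assms(1,3)] by blast
qed

end
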